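(* Let $F$ be a field, let $A_n$ be a Cayley--Dickson algebra over $F$ and $A_{n+1}=A_n\{\gamma_n\}$ for some $\gamma_n\in F^\times$. Let $a,b\in A_n$ be alternative elements of $A_n$, and assume that either $a\in F$, or $b\in F$, or $F+Fa=F+Fb$. Then $(a,b)$ is an alternative element of $A_{n+1}$.
   Context: For an $F$-algebra $B$ with involution $a\mapsto\bar a$ and $\gamma\in F^\times$, the Cayley--Dickson double $B\{\gamma\}$ is $B\times B$ with componentwise addition and scalar multiplication, product $(a,b)(c,d)=(ac+\gamma\bar d b,\ da+b\bar c)$ and involution $\overline{(a,b)}=(\bar a,-b)$. Cayley--Dickson algebras over $F$: $A_1=F[\ell_1:\ell_1^2=\ell_1+\mu]=F+F\ell_1$ with $\mu\in F$, $4\mu+1\neq 0$, and involution $\overline{\alpha+\beta\ell_1}=(\alpha+\beta)-\beta\ell_1$; then $A_{k+1}=A_k\{\gamma_k\}$ with $\gamma_k\in F^\times$. ($F$ is identified with $F\cdot 1$.) An element $a$ of an algebra $A$ is alternative if $a(ab)=a^2b$ and $(ba)a=ba^2$ for all $b\in A$. *)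

theory Defs
  imports Main
begin

text \<open>Elements of the Cayley--Dickson algebra A_n over a field are encoded as
coordinate functions nat => 'a supported on indices < 2^n.
A_1 = F + F l1: coordinate 0 is the F-part, coordinate 1 the l1-part.
A_(k+1) = A_k x A_k: a pair (a,b) is stored with a in coordinates < 2^k and
b in coordinates 2^k .. 2^(k+1)-1.  The identity 1 (hence F = F*1) sits at
coordinate 0 at every level.  Level 0 (just F) is only an auxiliary base.\<close>

definition cd_carrier :: "nat \<Rightarrow> (nat \<Rightarrow> 'a::field) set" where
  "cd_carrier n = {x. \<forall>i. 2 ^ n \<le> i \<longrightarrow> x i = 0}"

definition cd_lo :: "nat \<Rightarrow> (nat \<Rightarrow> 'a::field) \<Rightarrow> nat \<Rightarrow> 'a" where
  "cd_lo n x = (\<lambda>i. if i < 2 ^ n then x i else 0)"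

definition cd_hi :: "nat \<Rightarrow> (nat \<Rightarrow> 'a::field) \<Rightarrow> nat \<Rightarrow> 'a" where
  "cd_hi n x = (\<lambda>i. if i < 2 ^ n then x (i + 2 ^ n) else 0)"

definition cd_pair :: "nat \<Rightarrow> (nat \<Rightarrow> 'a::field) \<Rightarrow> (nat \<Rightarrow> 'a) \<Rightarrow> nat \<Rightarrow> 'a" where
  "cd_pair n a b = (\<lambda>i. if i < 2 ^ n then a i
                        else if i < 2 ^ Suc n then b (i - 2 ^ n) else 0)"

definition cd_add :: "(nat \<Rightarrow> 'a::field) \<Rightarrow> (nat \<Rightarrow> 'a) \<Rightarrow> nat \<Rightarrow> 'a" where
  "cd_add x y = (\<lambda>i. x i + y i)"

definition cd_smul :: "'a::field \<Rightarrow> (nat \<Rightarrow> 'a) \<Rightarrow> nat \<Rightarrow> 'a" where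
  "cd_smul c x = (\<lambda>i. c * x i)"

definition cd_neg :: "(nat \<Rightarrow> 'a::field) \<Rightarrow> nat \<Rightarrow> 'a" where
  "cd_neg x = (\<lambda>i. - x i)"

definition cd_scalar :: "'a::field \<Rightarrow> nat \<Rightarrow> 'a" where
  "cd_scalar c = (\<lambda>i. if i = 0 then c else 0)"

fun cd_conj :: "nat \<Rightarrow> (nat \<Rightarrow> 'a::field) \<Rightarrow> nat \<Rightarrow> 'a" where
  "cd_conj 0 x = (\<lambda>i. if i = 0 then x 0 else 0)"
| "cd_conj (Suc 0) x = (\<lambda>i. if i = 0 then x 0 + x 1 else if i = 1 then - x 1 else 0)"
| "cd_conj (Suc (Suc n)) x =
     cd_pair (Suc n) (cd_conj (Suc n) (cd_lo (Suc n) x)) (cd_neg (cd_hi (Suc n) x))"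

text \<open>Multiplication on A_n with parameters mu (for A_1) and gamma
(A_(k+1) = A_k{gamma k}).\<close>
fun cd_mul :: "'a::field \<Rightarrow> (nat \<Rightarrow> 'a) \<Rightarrow> nat \<Rightarrow> (nat \<Rightarrow> 'a) \<Rightarrow> (nat \<Rightarrow> 'a) \<Rightarrow> nat \<Rightarrow> 'a" where
  "cd_mul \<mu> \<gamma> 0 x y = (\<lambda>i. if i = 0 then x 0 * y 0 else 0)"
| "cd_mul \<mu> \<gamma> (Suc 0) x y =
     (\<lambda>i. if i = 0 then x 0 * y 0 + \<mu> * (x 1 * y 1)
          else if i = 1 then x 0 * y 1 + x 1 * y 0 + x 1 * y 1 else 0)"
| "cd_mul \<mu> \<gamma> (Suc (Suc n)) x y =
     (let m = Suc n; a = cd_lo m x; b = cd_hi m x; c = cd_lo m y; d = cd_hi m y in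
      cd_pair m
        (cd_add (cd_mul \<mu> \<gamma> m a c) (cd_smul (\<gamma> m) (cd_mul \<mu> \<gamma> m (cd_conj m d) b)))
        (cd_add (cd_mul \<mu> \<gamma> m d a) (cd_mul \<mu> \<gamma> m b (cd_conj m c))))"

definition cd_alternative :: "'a::field \<Rightarrow> (nat \<Rightarrow> 'a) \<Rightarrow> nat \<Rightarrow> (nat \<Rightarrow> 'a) \<Rightarrow> bool" where
  "cd_alternative \<mu> \<gamma> n a \<longleftrightarrow> a \<in> cd_carrier n \<and>
     (\<forall>b\<in>cd_carrier n.
        cd_mul \<mu> \<gamma> n a (cd_mul \<mu> \<gamma> n a b) = cd_mul \<mu> \<gamma> n (cd_mul \<mu> \<gamma> n a a) b \<and>
        cd_mul \<mu> \<gamma> n (cd_mul \<mu> \<gamma> n b a) a = cd_mul \<mu> \<gamma> n b (cd_mul \<mu> \<gamma> n a a))"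

definition cd_span1 :: "(nat \<Rightarrow> 'a::field) \<Rightarrow> (nat \<Rightarrow> 'a) set" where
  "cd_span1 a = {cd_add (cd_scalar \<alpha>) (cd_smul \<beta> a) | \<alpha> \<beta>. True}"

end

theory Submission
  imports Defs "HOL-Library.Function_Algebras"
begin

text \<open>
  Write \<open>x = (a, b)\<close> and \<open>y = (c, d)\<close>. Expanding \<open>x (x y)\<close>, \<open>(x x) y\<close>, \<open>(y x) x\<close>
  and \<open>y (x x)\<close> by the doubling formula and eliminating conjugates through
  \<open>z\<^sup>* = t(z) - z\<close>, all terms are matched by the alternative laws of \<open>a\<close> and \<open>b\<close>
  (in the form \<open>a (a z) = t(a) a z - n(a) z\<close>) except for associators \<open>(a, z, b)\<close>
  and \<open>(b, z, a)\<close>. Hence \<open>(a, b)\<close> is alternative once \<open>(a z) b = a (z b)\<close> and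
  \<open>(b z) a = b (z a)\<close> for all \<open>z\<close>. Each of the three hypotheses puts \<open>a\<close> into
  \<open>F + F b\<close> or \<open>b\<close> into \<open>F + F a\<close>, and then these identities reduce to the flexible
  law \<open>(b z) b = b (z b)\<close>. Every \<open>A\<^sub>n\<close> is flexible, since flexibility passes along
  the doubling by the linearised flexible law.
\<close>

text \<open>As simp rules, these evaluation lemmas would turn sums and products of functions
  into lambda terms; we reason with the pointwise algebra of \<open>nat \<Rightarrow> 'a\<close> instead.\<close>

declare plus_fun_apply [simp del] minus_apply [simp del] uminus_apply [simp del]
  times_fun_apply [simp del] zero_fun_apply [simp del] one_fun_apply [simp del]

text \<open>Scalar multiplication is the pointwise product with a constant function, so that
  \<open>algebra_simps\<close> normalises scalar coefficients together with the algebra elements.\<close>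

definition const_fun :: "'a \<Rightarrow> nat \<Rightarrow> 'a" where
  "const_fun c = (\<lambda>_. c)"

definition is_const_fun :: "(nat \<Rightarrow> 'a) \<Rightarrow> bool" where
  "is_const_fun k \<longleftrightarrow> (\<exists>c. k = const_fun c)"

lemma const_fun_apply: "const_fun c i = c"
  by (simp add: const_fun_def)

lemmas fun_apply_simps = const_fun_apply plus_fun_apply minus_apply uminus_apply times_fun_apply
  zero_fun_apply one_fun_apply

lemma const_fun_mult: "const_fun (a * b) = const_fun a * const_fun b"
  and const_fun_add: "const_fun (a + b) = const_fun a + const_fun b"
  and const_fun_diff: "const_fun (a - b) = const_fun a - const_fun b"
  and const_fun_uminus: "const_fun (- a) = - const_fun a"
  by (simp_all add: fun_eq_iff fun_apply_simps)

lemma const_fun_0 [simp]: "const_fun 0 = 0"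
  and const_fun_1 [simp]: "const_fun 1 = 1"
  by (simp_all add: fun_eq_iff fun_apply_simps)

lemma uminus_eq_const_fun_mult: "- x = const_fun (- 1) * (x :: nat \<Rightarrow> 'a :: ring_1)"
  by (simp add: fun_eq_iff fun_apply_simps)

lemma zero_eq_const_fun_mult: "0 = const_fun 0 * (x :: nat \<Rightarrow> 'a :: ring_1)"
  by (simp add: fun_eq_iff fun_apply_simps)

lemma is_const_fun_const_fun [simp]: "is_const_fun (const_fun c)"
  and is_const_fun_0 [simp]: "is_const_fun 0"
  and is_const_fun_1 [simp]: "is_const_fun 1"
  and is_const_fun_numeral [simp]: "is_const_fun (numeral w)"
  by (auto simp: is_const_fun_def fun_eq_iff fun_apply_simps numeral_fun intro: exI[of _ 0] exI[of _ 1])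

lemma is_const_fun_mult [simp]: "is_const_fun k \<Longrightarrow> is_const_fun l \<Longrightarrow> is_const_fun (k * l)"
  and is_const_fun_add [simp]: "is_const_fun k \<Longrightarrow> is_const_fun l \<Longrightarrow> is_const_fun (k + l)"
  and is_const_fun_diff [simp]: "is_const_fun k \<Longrightarrow> is_const_fun l \<Longrightarrow> is_const_fun (k - l)"
  and is_const_fun_uminus [simp]: "is_const_fun k \<Longrightarrow> is_const_fun (- k)"
  by (auto simp: is_const_fun_def simp flip: const_fun_mult const_fun_add const_fun_diff const_fun_uminus)

lemma cd_add_eq [simp]: "cd_add x y = x + y"
  and cd_neg_eq [simp]: "cd_neg x = - x"
  and cd_smul_eq [simp]: "cd_smul c x = const_fun c * x"
  by (simp_all add: cd_add_def cd_neg_def cd_smul_def fun_eq_iff fun_apply_simps)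

definition cd_one :: "nat \<Rightarrow> 'a::field" where
  "cd_one = cd_scalar 1"

lemma cd_scalar_eq: "cd_scalar c = const_fun c * cd_one"
  by (simp add: cd_one_def cd_scalar_def fun_eq_iff fun_apply_simps)

lemma cd_carrier_add [simp]: "x \<in> cd_carrier n \<Longrightarrow> y \<in> cd_carrier n \<Longrightarrow> x + y \<in> cd_carrier n"
  and cd_carrier_diff [simp]: "x \<in> cd_carrier n \<Longrightarrow> y \<in> cd_carrier n \<Longrightarrow> x - y \<in> cd_carrier n"
  and cd_carrier_uminus [simp]: "x \<in> cd_carrier n \<Longrightarrow> - x \<in> cd_carrier n"
  and cd_carrier_mult_left [simp]: "x \<in> cd_carrier n \<Longrightarrow> k * x \<in> cd_carrier n"
  and cd_carrier_0 [simp]: "0 \<in> cd_carrier n"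
  and cd_carrier_scalar [simp]: "cd_scalar c \<in> cd_carrier n"
  and cd_carrier_one [simp]: "cd_one \<in> cd_carrier n"
  and cd_carrier_pair [simp]: "cd_pair m a b \<in> cd_carrier (Suc m)"
  and cd_carrier_lo [simp]: "cd_lo m x \<in> cd_carrier m"
  and cd_carrier_hi [simp]: "cd_hi m x \<in> cd_carrier m"
  by (simp_all add: cd_carrier_def cd_scalar_def cd_one_def cd_pair_def cd_lo_def cd_hi_def fun_apply_simps)

lemma cd_lo_pair [simp]: "a \<in> cd_carrier m \<Longrightarrow> cd_lo m (cd_pair m a b) = a"
  and cd_hi_pair [simp]: "b \<in> cd_carrier m \<Longrightarrow> cd_hi m (cd_pair m a b) = b"
  by (auto simp: cd_carrier_def cd_lo_def cd_hi_def cd_pair_def fun_eq_iff fun_apply_simps)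

lemma cd_pair_lo_hi: "x \<in> cd_carrier (Suc m) \<Longrightarrow> cd_pair m (cd_lo m x) (cd_hi m x) = x"
  by (auto simp: cd_carrier_def cd_lo_def cd_hi_def cd_pair_def fun_eq_iff fun_apply_simps)

lemma cd_pair_cases:
  assumes "x \<in> cd_carrier (Suc m)"
  obtains a b where "a \<in> cd_carrier m" "b \<in> cd_carrier m" "x = cd_pair m a b"
  using cd_pair_lo_hi[OF assms] cd_carrier_lo cd_carrier_hi by metis

lemma cd_pair_eq_iff:
  "a \<in> cd_carrier m \<Longrightarrow> b \<in> cd_carrier m \<Longrightarrow> c \<in> cd_carrier m \<Longrightarrow> d \<in> cd_carrier m \<Longrightarrow>
    cd_pair m a b = cd_pair m c d \<longleftrightarrow> a = c \<and> b = d"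
  by (metis cd_lo_pair cd_hi_pair)

lemma cd_pair_add: "cd_pair m a b + cd_pair m c d = cd_pair m (a + c) (b + d)"
  and cd_pair_uminus: "- cd_pair m a b = cd_pair m (- a) (- b)"
  and cd_pair_const_fun_mult: "const_fun s * cd_pair m a b = cd_pair m (const_fun s * a) (const_fun s * b)"
  and cd_pair_apply_0 [simp]: "cd_pair m a b 0 = a 0"
  by (simp_all add: cd_pair_def fun_eq_iff fun_apply_simps)

lemma cd_scalar_eq_pair: "cd_scalar c = cd_pair m (cd_scalar c) 0"
  by (simp add: cd_pair_def cd_scalar_def fun_eq_iff fun_apply_simps)

lemma cd_lo_add: "cd_lo m (x + y) = cd_lo m x + cd_lo m y"
  and cd_hi_add: "cd_hi m (x + y) = cd_hi m x + cd_hi m y"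
  and cd_lo_const_fun_mult: "cd_lo m (const_fun c * x) = const_fun c * cd_lo m x"
  and cd_hi_const_fun_mult: "cd_hi m (const_fun c * x) = const_fun c * cd_hi m x"
  by (simp_all add: cd_lo_def cd_hi_def fun_eq_iff fun_apply_simps)

lemma cd_level_induct [case_names 0 1 Suc_Suc]:
  "P 0 \<Longrightarrow> P (Suc 0) \<Longrightarrow> (\<And>k. P (Suc k) \<Longrightarrow> P (Suc (Suc k))) \<Longrightarrow> P n"
  by (induction n rule: nat_less_induct) (metis lessI not0_implies_Suc)

section \<open>Involution and trace\<close>

lemma cd_carrier_conj [simp]: "cd_conj n x \<in> cd_carrier n"
proof (cases "(n, x)" rule: cd_conj.cases)
  case (3 m y)
  then show ?thesis by simp
qed (simp_all add: cd_carrier_def)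

lemma cd_conj_pair:
  "a \<in> cd_carrier (Suc k) \<Longrightarrow> b \<in> cd_carrier (Suc k) \<Longrightarrow>
    cd_conj (Suc (Suc k)) (cd_pair (Suc k) a b) = cd_pair (Suc k) (cd_conj (Suc k) a) (- b)"
  by simp

lemma cd_conj_add: "cd_conj n (x + y) = cd_conj n x + cd_conj n y"
proof (induction n arbitrary: x y rule: cd_level_induct)
  case (Suc_Suc k)
  then show ?case by (simp add: cd_lo_add cd_hi_add cd_pair_add)
qed (simp_all add: fun_eq_iff fun_apply_simps)

lemma cd_conj_const_fun_mult: "cd_conj n (const_fun c * x) = const_fun c * cd_conj n x"
proof (induction n arbitrary: x rule: cd_level_induct)
  case (Suc_Suc k)
  then show ?case by (simp add: cd_lo_const_fun_mult cd_hi_const_fun_mult cd_pair_const_fun_mult)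
qed (simp_all add: fun_eq_iff fun_apply_simps algebra_simps)

lemma cd_conj_uminus: "cd_conj n (- x) = - cd_conj n x"
  by (metis cd_conj_const_fun_mult uminus_eq_const_fun_mult)

lemma cd_conj_0: "cd_conj n 0 = 0"
  by (metis cd_conj_const_fun_mult zero_eq_const_fun_mult)

lemma cd_conj_diff: "cd_conj n (x - y) = cd_conj n x - cd_conj n y"
  by (simp only: diff_conv_add_uminus cd_conj_add cd_conj_uminus)

lemma cd_conj_const_fun_mult':
  "is_const_fun k \<Longrightarrow> cd_conj n (k * x) = k * cd_conj n x"
  "is_const_fun k \<Longrightarrow> cd_conj n (x * k) = cd_conj n x * k"
  by (auto simp: is_const_fun_def cd_conj_const_fun_mult mult.commute[of x])

lemma cd_conj_scalar [simp]: "cd_conj n (cd_scalar c) = cd_scalar c"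
proof (induction n rule: cd_level_induct)
  case (Suc_Suc k)
  then show ?case
    by (subst (1 2) cd_scalar_eq_pair[of c "Suc k"]) (simp del: cd_conj.simps add: cd_conj_pair)
qed (simp_all add: fun_eq_iff fun_apply_simps cd_scalar_def)

lemma cd_conj_conj [simp]: "x \<in> cd_carrier n \<Longrightarrow> cd_conj n (cd_conj n x) = x"
proof (induction n arbitrary: x rule: cd_level_induct)
  case (Suc_Suc k)
  then obtain a b where "a \<in> cd_carrier (Suc k)" "b \<in> cd_carrier (Suc k)" "x = cd_pair (Suc k) a b"
    using cd_pair_cases by blast
  with Suc_Suc.IH show ?case
    by (simp del: cd_conj.simps add: cd_conj_pair)
qed (auto simp: fun_eq_iff fun_apply_simps cd_carrier_def)

lemma cd_trace_exists: "x \<in> cd_carrier n \<Longrightarrow> \<exists>t. x + cd_conj n x = cd_scalar t"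
proof (induction n arbitrary: x rule: cd_level_induct)
  case 0
  then show ?case
    by (intro exI[of _ "2 * x 0"]) (auto simp: fun_eq_iff fun_apply_simps cd_scalar_def cd_carrier_def)
next
  case 1
  then show ?case
    by (intro exI[of _ "2 * x 0 + x 1"])
      (auto simp: fun_eq_iff fun_apply_simps cd_scalar_def cd_carrier_def)
next
  case (Suc_Suc k)
  then obtain a b where ab: "a \<in> cd_carrier (Suc k)" "b \<in> cd_carrier (Suc k)" "x = cd_pair (Suc k) a b"
    using cd_pair_cases by blast
  then obtain t where "a + cd_conj (Suc k) a = cd_scalar t"
    using Suc_Suc.IH by blast
  then have "x + cd_conj (Suc (Suc k)) x = cd_pair (Suc k) (cd_scalar t) 0"
    using ab by (simp del: cd_conj.simps add: cd_conj_pair cd_pair_add)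
  then show ?case
    using cd_scalar_eq_pair by metis
qed

definition cd_trace :: "nat \<Rightarrow> (nat \<Rightarrow> 'a::field) \<Rightarrow> 'a" where
  "cd_trace n x = (x + cd_conj n x) 0"

lemma cd_add_conj: "x \<in> cd_carrier n \<Longrightarrow> x + cd_conj n x = cd_scalar (cd_trace n x)"
  using cd_trace_exists by (fastforce simp: cd_trace_def cd_scalar_def)

lemma cd_conj_eq: "x \<in> cd_carrier n \<Longrightarrow> cd_conj n x = cd_scalar (cd_trace n x) - x"
  by (metis cd_add_conj add_diff_cancel_left')

context
  fixes \<mu> :: "'a::field" and \<gamma> :: "nat \<Rightarrow> 'a"
begin

abbreviation mul :: "nat \<Rightarrow> (nat \<Rightarrow> 'a) \<Rightarrow> (nat \<Rightarrow> 'a) \<Rightarrow> nat \<Rightarrow> 'a" where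
  "mul \<equiv> cd_mul \<mu> \<gamma>"

lemma cd_carrier_mul [simp]: "mul n x y \<in> cd_carrier n"
proof (cases "(\<mu>, \<gamma>, n, x, y)" rule: cd_mul.cases)
  case (3 \<mu>' \<gamma>' m x' y')
  then show ?thesis by (simp add: Let_def)
qed (auto simp: cd_carrier_def)

lemma cd_mul_pair:
  "a \<in> cd_carrier (Suc k) \<Longrightarrow> b \<in> cd_carrier (Suc k) \<Longrightarrow>
   c \<in> cd_carrier (Suc k) \<Longrightarrow> d \<in> cd_carrier (Suc k) \<Longrightarrow>
   mul (Suc (Suc k)) (cd_pair (Suc k) a b) (cd_pair (Suc k) c d) =
   cd_pair (Suc k)
     (mul (Suc k) a c + const_fun (\<gamma> (Suc k)) * mul (Suc k) (cd_conj (Suc k) d) b)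
     (mul (Suc k) d a + mul (Suc k) b (cd_conj (Suc k) c))"
  by (simp add: Let_def)

lemma cd_mul_add:
  "mul n (x + y) z = mul n x z + mul n y z \<and> mul n z (x + y) = mul n z x + mul n z y"
proof (induction n arbitrary: x y z rule: cd_level_induct)
  case (Suc_Suc k)
  then show ?case by (simp add: Let_def cd_lo_add cd_hi_add cd_pair_add cd_conj_add algebra_simps)
qed (simp_all add: fun_eq_iff fun_apply_simps algebra_simps)

lemma cd_mul_add_left: "mul n (x + y) z = mul n x z + mul n y z"
  and cd_mul_add_right: "mul n z (x + y) = mul n z x + mul n z y"
  using cd_mul_add by simp_all

lemma cd_mul_const_fun_mult:
  "mul n (const_fun c * x) z = const_fun c * mul n x z \<and>
   mul n z (const_fun c * x) = const_fun c * mul n z x"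
proof (induction n arbitrary: x z rule: cd_level_induct)
  case (Suc_Suc k)
  then show ?case
    by (simp add: Let_def cd_lo_const_fun_mult cd_hi_const_fun_mult cd_pair_const_fun_mult
        cd_conj_const_fun_mult) (simp add: algebra_simps)
qed (simp_all add: fun_eq_iff fun_apply_simps algebra_simps)

lemma cd_mul_const_fun_mult_left: "mul n (const_fun c * x) z = const_fun c * mul n x z"
  and cd_mul_const_fun_mult_right: "mul n z (const_fun c * x) = const_fun c * mul n z x"
  using cd_mul_const_fun_mult by simp_all

lemma cd_mul_uminus_left: "mul n (- x) z = - mul n x z"
  and cd_mul_uminus_right: "mul n z (- x) = - mul n z x"
  and cd_mul_0_left: "mul n 0 z = 0"
  and cd_mul_0_right: "mul n z 0 = 0"
  by (metis cd_mul_const_fun_mult_left cd_mul_const_fun_mult_right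
      uminus_eq_const_fun_mult zero_eq_const_fun_mult)+

lemma cd_mul_diff_left: "mul n (x - y) z = mul n x z - mul n y z"
  and cd_mul_diff_right: "mul n z (x - y) = mul n z x - mul n z y"
  by (simp_all only: diff_conv_add_uminus cd_mul_add_left cd_mul_add_right
      cd_mul_uminus_left cd_mul_uminus_right)

lemma cd_mul_is_const_fun_mult:
  "is_const_fun k \<Longrightarrow> mul n (k * x) z = k * mul n x z"
  "is_const_fun k \<Longrightarrow> mul n (x * k) z = mul n x z * k"
  "is_const_fun k \<Longrightarrow> mul n z (k * x) = k * mul n z x"
  "is_const_fun k \<Longrightarrow> mul n z (x * k) = mul n z x * k"
  by (auto simp: is_const_fun_def cd_mul_const_fun_mult_left cd_mul_const_fun_mult_right
      mult.commute[of x] mult.commute[of "mul n _ _"])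

lemmas cd_linear_simps =
  cd_mul_add_left cd_mul_add_right cd_mul_const_fun_mult_left cd_mul_const_fun_mult_right
  cd_mul_uminus_left cd_mul_uminus_right cd_mul_0_left cd_mul_0_right
  cd_mul_diff_left cd_mul_diff_right
  cd_conj_add cd_conj_const_fun_mult cd_conj_uminus cd_conj_0 cd_conj_diff

section \<open>Scalars and the norm\<close>

lemma cd_mul_scalar:
  "x \<in> cd_carrier n \<Longrightarrow>
    mul n (cd_scalar c) x = const_fun c * x \<and> mul n x (cd_scalar c) = const_fun c * x"
proof (induction n arbitrary: x rule: cd_level_induct)
  case (Suc_Suc k)
  then obtain a b where "a \<in> cd_carrier (Suc k)" "b \<in> cd_carrier (Suc k)" "x = cd_pair (Suc k) a b"
    using cd_pair_cases by blast
  with Suc_Suc.IH show ?case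
    by (subst (1 2) cd_scalar_eq_pair[of c "Suc k"])
      (simp add: cd_mul_pair cd_linear_simps cd_pair_const_fun_mult)
qed (auto simp: fun_eq_iff fun_apply_simps cd_scalar_def cd_carrier_def)

lemma cd_mul_scalar_left [simp]: "x \<in> cd_carrier n \<Longrightarrow> mul n (cd_scalar c) x = const_fun c * x"
  and cd_mul_scalar_right [simp]: "x \<in> cd_carrier n \<Longrightarrow> mul n x (cd_scalar c) = const_fun c * x"
  using cd_mul_scalar by simp_all

lemma cd_mul_one_left [simp]: "x \<in> cd_carrier n \<Longrightarrow> mul n cd_one x = x"
  and cd_mul_one_right [simp]: "x \<in> cd_carrier n \<Longrightarrow> mul n x cd_one = x"
  by (simp_all add: cd_one_def)

lemma cd_conj_mul:
  "x \<in> cd_carrier n \<Longrightarrow> y \<in> cd_carrier n \<Longrightarrow> cd_conj n (mul n x y) = mul n (cd_conj n y) (cd_conj n x)"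
proof (induction n arbitrary: x y rule: cd_level_induct)
  case (Suc_Suc k)
  obtain a b where "a \<in> cd_carrier (Suc k)" "b \<in> cd_carrier (Suc k)" "x = cd_pair (Suc k) a b"
    using cd_pair_cases Suc_Suc.prems(1) by blast
  moreover obtain c d where "c \<in> cd_carrier (Suc k)" "d \<in> cd_carrier (Suc k)" "y = cd_pair (Suc k) c d"
    using cd_pair_cases Suc_Suc.prems(2) by blast
  ultimately show ?case using Suc_Suc.IH
    by (simp del: cd_conj.simps cd_mul.simps
        add: cd_conj_pair cd_mul_pair cd_linear_simps cd_pair_uminus cd_pair_eq_iff)
qed (auto simp: fun_eq_iff fun_apply_simps algebra_simps)

lemma cd_norm_exists:
  "x \<in> cd_carrier n \<Longrightarrow>
    \<exists>c. mul n x (cd_conj n x) = cd_scalar c \<and> mul n (cd_conj n x) x = cd_scalar c"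
proof (induction n arbitrary: x rule: cd_level_induct)
  case 0
  then show ?case
    by (intro exI[of _ "x 0 * x 0"]) (auto simp: fun_eq_iff fun_apply_simps cd_scalar_def cd_carrier_def)
next
  case 1
  then show ?case
    by (intro exI[of _ "x 0 * x 0 + x 0 * x 1 - \<mu> * x 1 * x 1"])
      (auto simp: fun_eq_iff fun_apply_simps cd_scalar_def cd_carrier_def algebra_simps)
next
  case (Suc_Suc k)
  then obtain a b where ab: "a \<in> cd_carrier (Suc k)" "b \<in> cd_carrier (Suc k)" "x = cd_pair (Suc k) a b"
    using cd_pair_cases by blast
  obtain s where s: "mul (Suc k) a (cd_conj (Suc k) a) = cd_scalar s" "mul (Suc k) (cd_conj (Suc k) a) a = cd_scalar s"
    using Suc_Suc.IH ab(1) by blast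
  obtain t where t: "mul (Suc k) b (cd_conj (Suc k) b) = cd_scalar t" "mul (Suc k) (cd_conj (Suc k) b) b = cd_scalar t"
    using Suc_Suc.IH ab(2) by blast
  have "mul (Suc (Suc k)) x (cd_conj (Suc (Suc k)) x) = cd_pair (Suc k) (cd_scalar (s - \<gamma> (Suc k) * t)) 0"
    and "mul (Suc (Suc k)) (cd_conj (Suc (Suc k)) x) x = cd_pair (Suc k) (cd_scalar (s - \<gamma> (Suc k) * t)) 0"
    using ab s t
    by (simp_all del: cd_conj.simps cd_mul.simps
        add: cd_conj_pair cd_mul_pair cd_linear_simps cd_scalar_eq const_fun_diff const_fun_mult algebra_simps)
  then show ?case
    using cd_scalar_eq_pair by metis
qed

definition cd_norm :: "nat \<Rightarrow> (nat \<Rightarrow> 'a) \<Rightarrow> 'a" where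
  "cd_norm n x = mul n x (cd_conj n x) 0"

lemma cd_mul_conj_right: "x \<in> cd_carrier n \<Longrightarrow> mul n x (cd_conj n x) = cd_scalar (cd_norm n x)"
  and cd_mul_conj_left: "x \<in> cd_carrier n \<Longrightarrow> mul n (cd_conj n x) x = cd_scalar (cd_norm n x)"
  using cd_norm_exists by (fastforce simp: cd_norm_def cd_scalar_def)+

lemma cd_mul_self:
  "x \<in> cd_carrier n \<Longrightarrow> mul n x x = const_fun (cd_trace n x) * x - cd_scalar (cd_norm n x)"
  using cd_mul_conj_right[of x n] by (simp add: cd_conj_eq cd_linear_simps algebra_simps)

lemmas cd_normalize_simps =
  cd_linear_simps cd_mul_is_const_fun_mult cd_conj_const_fun_mult' cd_scalar_eq
  const_fun_mult const_fun_add const_fun_diff const_fun_uminus algebra_simps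

section \<open>Flexibility\<close>

definition cd_flexible :: "nat \<Rightarrow> bool" where
  "cd_flexible n \<longleftrightarrow>
    (\<forall>x\<in>cd_carrier n. \<forall>y\<in>cd_carrier n. mul n (mul n x y) x = mul n x (mul n y x))"

lemma cd_flexible_linearized:
  assumes flex: "cd_flexible n"
    and x: "x \<in> cd_carrier n" and y: "y \<in> cd_carrier n" and z: "z \<in> cd_carrier n"
  shows "mul n (mul n x y) z = mul n x (mul n y z) - mul n (mul n z y) x + mul n z (mul n y x)"
proof -
  have "mul n (mul n (x + z) y) (x + z) = mul n (x + z) (mul n y (x + z))"
    and "mul n (mul n x y) x = mul n x (mul n y x)"
    and "mul n (mul n z y) z = mul n z (mul n y z)"
    using flex x y z by (simp_all add: cd_flexible_def)
  then show ?thesis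
    by (simp add: cd_linear_simps algebra_simps)
qed

lemma cd_flexible_conj_rotate:
  assumes flex: "cd_flexible n" and u: "u \<in> cd_carrier n" and b: "b \<in> cd_carrier n"
  shows "mul n (mul n u (cd_conj n b)) b = mul n (cd_conj n b) (mul n b u)"
  using cd_flexible_linearized[OF flex u b b] u b
  by (simp add: cd_conj_eq[OF b] cd_mul_self[OF b] cd_normalize_simps)

lemma cd_flexible_conj_exchange:
  assumes flex: "cd_flexible n"
    and a: "a \<in> cd_carrier n" and b: "b \<in> cd_carrier n" and d: "d \<in> cd_carrier n"
  shows "mul n a (mul n (cd_conj n b) d) =
    mul n (mul n (cd_conj n d) b) a + mul n (cd_conj n b) (mul n d a) - mul n (mul n a (cd_conj n d)) b"
proof -
  define w where "w = mul n b (cd_conj n d)"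
  have "w \<in> cd_carrier n" by (simp add: w_def)
  then have "w + mul n d (cd_conj n b) = cd_scalar (cd_trace n w)"
    using b d cd_add_conj[of w n] by (simp add: w_def cd_conj_mul)
  then have db: "mul n d b = const_fun (cd_trace n d) * b + const_fun (cd_trace n b) * d
      - cd_scalar (cd_trace n w) - mul n b d"
    using b d by (simp add: w_def cd_conj_eq[OF b] cd_conj_eq[OF d] cd_normalize_simps)
  show ?thesis
    using a b d
    by (simp add: cd_flexible_linearized[OF flex a d b] db cd_conj_eq[OF b] cd_conj_eq[OF d]
        cd_normalize_simps)
qed

lemma cd_flexible: "cd_flexible n"
proof (induction n rule: cd_level_induct)
  case 0
  then show ?case by (auto simp: cd_flexible_def fun_eq_iff fun_apply_simps)
next
  case 1
  then show ?case by (auto simp: cd_flexible_def fun_eq_iff fun_apply_simps algebra_simps)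
next
  case (Suc_Suc k)
  let ?m = "Suc k"
  have "mul (Suc ?m) (mul (Suc ?m) x y) x = mul (Suc ?m) x (mul (Suc ?m) y x)"
    if x: "x \<in> cd_carrier (Suc ?m)" and y: "y \<in> cd_carrier (Suc ?m)" for x y
  proof -
    obtain a b where ab: "a \<in> cd_carrier ?m" "b \<in> cd_carrier ?m" "x = cd_pair ?m a b"
      using cd_pair_cases[OF x] by blast
    obtain c d where cd: "c \<in> cd_carrier ?m" "d \<in> cd_carrier ?m" "y = cd_pair ?m c d"
      using cd_pair_cases[OF y] by blast
    have flex_ac: "mul ?m (mul ?m a c) a = mul ?m a (mul ?m c a)"
      using Suc_Suc ab cd by (simp add: cd_flexible_def)
    note rotate = cd_flexible_conj_rotate[OF Suc_Suc _ ab(2), of "cd_conj ?m c", simplified]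
    note exchange = cd_flexible_conj_exchange[OF Suc_Suc ab(1) ab(2) cd(2)]
    from ab cd show ?thesis
    proof (simp del: cd_conj.simps cd_mul.simps add: cd_conj_pair cd_mul_pair cd_linear_simps
        cd_pair_uminus cd_pair_eq_iff cd_conj_mul, intro conjI, goal_cases)
      case 1
      then show ?case by (simp add: flex_ac rotate exchange cd_normalize_simps)
    next
      case 2
      then show ?case by (simp add: cd_conj_eq[OF ab(1)] cd_conj_eq[OF cd(1)] cd_normalize_simps)
    qed
  qed
  then show ?case
    by (simp add: cd_flexible_def)
qed

section \<open>Alternative elements of the doubled algebra\<close>

lemma cd_alternative_left:
  "cd_alternative \<mu> \<gamma> n x \<Longrightarrow> z \<in> cd_carrier n \<Longrightarrow>
    mul n x (mul n x z) = const_fun (cd_trace n x) * mul n x z - const_fun (cd_norm n x) * z"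
  and cd_alternative_right:
  "cd_alternative \<mu> \<gamma> n x \<Longrightarrow> z \<in> cd_carrier n \<Longrightarrow>
    mul n (mul n z x) x = const_fun (cd_trace n x) * mul n z x - const_fun (cd_norm n x) * z"
  by (simp_all add: cd_alternative_def cd_mul_self cd_normalize_simps)

definition cd_middle_assoc :: "nat \<Rightarrow> (nat \<Rightarrow> 'a) \<Rightarrow> (nat \<Rightarrow> 'a) \<Rightarrow> bool" where
  "cd_middle_assoc n a b \<longleftrightarrow> (\<forall>z\<in>cd_carrier n.
     mul n (mul n a z) b = mul n a (mul n z b) \<and> mul n (mul n b z) a = mul n b (mul n z a))"

lemma cd_middle_assoc_commute: "cd_middle_assoc n a b \<longleftrightarrow> cd_middle_assoc n b a"
  by (auto simp: cd_middle_assoc_def)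

lemma cd_middle_assoc_if_mem_span1:
  assumes b: "b \<in> cd_carrier n" and "a \<in> cd_span1 b"
  shows "cd_middle_assoc n a b"
proof -
  obtain \<alpha> \<beta> where a: "a = const_fun \<alpha> * cd_one + const_fun \<beta> * b"
    using \<open>a \<in> cd_span1 b\<close> by (auto simp: cd_span1_def cd_scalar_eq)
  have "mul n (mul n b z) b = mul n b (mul n z b)" if "z \<in> cd_carrier n" for z
    using cd_flexible b that by (simp add: cd_flexible_def)
  then show ?thesis
    using b by (simp add: cd_middle_assoc_def a cd_normalize_simps)
qed

lemma cd_alternative_pair:
  assumes alt_a: "cd_alternative \<mu> \<gamma> (Suc k) a" and alt_b: "cd_alternative \<mu> \<gamma> (Suc k) b"
    and mid: "cd_middle_assoc (Suc k) a b"
  shows "cd_alternative \<mu> \<gamma> (Suc (Suc k)) (cd_pair (Suc k) a b)"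
proof -
  let ?m = "Suc k" and ?x = "cd_pair (Suc k) a b"
  have a: "a \<in> cd_carrier ?m" and b: "b \<in> cd_carrier ?m"
    using alt_a alt_b by (simp_all add: cd_alternative_def)
  note alternative_laws = cd_alternative_left[OF alt_a] cd_alternative_right[OF alt_a]
    cd_alternative_left[OF alt_b] cd_alternative_right[OF alt_b]
  have middle_laws:
    "\<And>z. z \<in> cd_carrier ?m \<Longrightarrow> mul ?m (mul ?m a z) b = mul ?m a (mul ?m z b)"
    "\<And>z. z \<in> cd_carrier ?m \<Longrightarrow> mul ?m (mul ?m b z) a = mul ?m b (mul ?m z a)"
    using mid by (simp_all add: cd_middle_assoc_def)
  have "mul (Suc ?m) ?x (mul (Suc ?m) ?x y) = mul (Suc ?m) (mul (Suc ?m) ?x ?x) y \<and>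
      mul (Suc ?m) (mul (Suc ?m) y ?x) ?x = mul (Suc ?m) y (mul (Suc ?m) ?x ?x)"
    if y: "y \<in> cd_carrier (Suc ?m)" for y
  proof -
    obtain c d where "c \<in> cd_carrier ?m" "d \<in> cd_carrier ?m" "y = cd_pair ?m c d"
      using cd_pair_cases[OF y] by blast
    with a b show ?thesis
      by (simp del: cd_conj.simps cd_mul.simps add: cd_conj_pair cd_mul_pair cd_linear_simps
          cd_pair_uminus cd_pair_eq_iff cd_conj_mul)
        (simp add: alternative_laws middle_laws cd_conj_eq[OF a] cd_conj_eq[OF b]
          cd_mul_self[OF a] cd_mul_self[OF b] cd_normalize_simps)
  qed
  then show ?thesis
    using a b by (simp add: cd_alternative_def)
qed

end

lemma cd_mem_span1_self: "a \<in> cd_span1 a"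
proof -
  have "a = cd_add (cd_scalar 0) (cd_smul 1 a)"
    by (simp add: cd_scalar_eq)
  then show ?thesis
    unfolding cd_span1_def by blast
qed

lemma cd_scalar_mem_span1: "cd_scalar c \<in> cd_span1 a"
proof -
  have "cd_scalar c = cd_add (cd_scalar c) (cd_smul 0 a)"
    by simp
  then show ?thesis
    unfolding cd_span1_def by blast
qed

theorem proposition2p2:
  fixes \<mu> :: "'a::field" and \<gamma> :: "nat \<Rightarrow> 'a" and n :: nat and a b :: "nat \<Rightarrow> 'a"
  assumes "1 \<le> n"
    and "4 * \<mu> + 1 \<noteq> 0"
    and "\<forall>k\<in>{1..n}. \<gamma> k \<noteq> 0"
    and "a \<in> cd_carrier n" and "b \<in> cd_carrier n"
    and "cd_alternative \<mu> \<gamma> n a" and "cd_alternative \<mu> \<gamma> n b"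
    and "(\<exists>c. a = cd_scalar c) \<or> (\<exists>c. b = cd_scalar c) \<or> cd_span1 a = cd_span1 b"
  shows "cd_alternative \<mu> \<gamma> (Suc n) (cd_pair n a b)"
proof -
  obtain k where n: "n = Suc k"
    using assms(1) by (cases n) auto
  have "a \<in> cd_span1 b \<or> b \<in> cd_span1 a"
    using assms(8) cd_scalar_mem_span1 cd_mem_span1_self by metis
  then have "cd_middle_assoc \<mu> \<gamma> n a b"
    using assms(4,5) cd_middle_assoc_if_mem_span1 cd_middle_assoc_commute by metis
  then show ?thesis
    using assms(6,7) unfolding n by (rule cd_alternative_pair[rotated 2])
qed

end
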